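(* Let $\mathbf{P_0},\mathbf{P_1}$ be $n\times n$ transition probability matrices of irreducible and aperiodic Markov chains on $n$ states, let $\mathbf{P_s}=(1-s)\mathbf{P_0}+s\mathbf{P_1}$ for $s\in[0,1]$, and let $\pi_s$ be the stationary distribution of $\mathbf{P_s}$. Then $s\mapsto\pi_s$ is continuous at $s=0$ with respect to the total variation norm. In particular, if $\epsilon>0$, $\sigma$ is the smallest nonzero singular value of $\mathbb{I}-\mathbf{P_0}$, and $\delta=\frac{\epsilon\sigma}{2n^{3/2}}$, then $\|\pi_s-\pi_0\|_{TV}\le\epsilon$ for all $s\in[0,1]$ with $s\le\delta$.
   Context: Distributions are row vectors; $\|\mu-\nu\|_{TV}=\frac12\|\mu-\nu\|_1$. Singular values are with respect to the Euclidean inner product; $\mathbb{I}$ is the identity matrix. *)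

theory Defs
  imports "HOL-Analysis.Analysis"
begin

text \<open>Transition matrices are real matrices indexed by a finite state type 'n
  (n = CARD('n)); distributions are row vectors, acting by v* .\<close>

fun mpow :: "real^'n^'n \<Rightarrow> nat \<Rightarrow> real^'n^'n" where
  "mpow P 0 = mat 1"
| "mpow P (Suc k) = mpow P k ** P"

definition stochastic :: "real^'n^'n \<Rightarrow> bool" where
  "stochastic P \<longleftrightarrow> (\<forall>i j. P $ i $ j \<ge> 0) \<and> (\<forall>i. (\<Sum>j\<in>UNIV. P $ i $ j) = 1)"

definition irreducible_chain :: "real^'n^'n \<Rightarrow> bool" where
  "irreducible_chain P \<longleftrightarrow> (\<forall>i j. \<exists>k. mpow P k $ i $ j > 0)"

definition aperiodic_chain :: "real^'n^'n \<Rightarrow> bool" where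
  "aperiodic_chain P \<longleftrightarrow> (\<forall>i. Gcd {k::nat. k > 0 \<and> mpow P k $ i $ i > 0} = 1)"

definition stationary_dist :: "real^'n^'n \<Rightarrow> real^'n \<Rightarrow> bool" where
  "stationary_dist P \<pi> \<longleftrightarrow> (\<forall>i. \<pi> $ i \<ge> 0) \<and> (\<Sum>i\<in>UNIV. \<pi> $ i) = 1 \<and> \<pi> v* P = \<pi>"

definition tv_dist :: "real^'n \<Rightarrow> real^'n \<Rightarrow> real" where
  "tv_dist \<mu> \<nu> = (1/2) * (\<Sum>i\<in>UNIV. \<bar>\<mu> $ i - \<nu> $ i\<bar>)"

definition singular_value :: "real^'n^'n \<Rightarrow> real \<Rightarrow> bool" where
  "singular_value A \<sigma> \<longleftrightarrow> \<sigma> \<ge> 0 \<and>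
     (\<exists>v. v \<noteq> 0 \<and> (transpose A ** A) *v v = (\<sigma>^2) *\<^sub>R v)"

definition min_nonzero_singular_value :: "real^'n^'n \<Rightarrow> real" where
  "min_nonzero_singular_value A = Min {\<sigma>. \<sigma> \<noteq> 0 \<and> singular_value A \<sigma>}"

end

theory Submission
  imports Defs
begin

text \<open>Write \<open>A = I - P\<^sub>0\<close> and \<open>d = \<pi>\<^sub>s - \<pi>\<^sub>0\<close>. Stationarity gives \<open>d A = s \<pi>\<^sub>s (P\<^sub>1 - P\<^sub>0)\<close>,
  a vector of norm at most \<open>2s\<close>. Irreducibility makes the left kernel of \<open>A\<close> the line through
  \<open>\<pi>\<^sub>0\<close>, so on its orthogonal complement \<open>|y A| \<ge> \<sigma> |y|\<close> with \<open>\<sigma>\<close> the smallest nonzero singular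
  value (the minimum of the Rayleigh quotient there is attained at a singular vector). Since \<open>d\<close>
  has coordinate sum zero, its component along \<open>\<pi>\<^sub>0\<close> is controlled by the orthogonal one, giving
  \<open>\<sigma> |d| \<le> 2 (1 + \<surd>n) s\<close>; the passage from the Euclidean norm to total variation costs \<open>\<surd>n/2\<close>.\<close>

lemma sum_abs_le_sqrt_card_norm:
  fixes x :: "real^'n"
  shows "(\<Sum>i\<in>UNIV. \<bar>x$i\<bar>) \<le> sqrt (real CARD('n)) * norm x"
proof -
  have "(\<Sum>i\<in>UNIV. \<bar>x$i\<bar>)\<^sup>2 \<le> (\<Sum>i\<in>UNIV. \<bar>x$i\<bar>\<^sup>2) * real CARD('n)"
    using sum_squared_le_sum_of_squares[of "\<lambda>i. \<bar>x$i\<bar>" UNIV] by simp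
  also have "(\<Sum>i\<in>UNIV. \<bar>x$i\<bar>\<^sup>2) = (norm x)\<^sup>2"
    unfolding power2_norm_eq_inner inner_vec_def by (simp add: power2_eq_square)
  finally have "(\<Sum>i\<in>UNIV. \<bar>x$i\<bar>)\<^sup>2 \<le> (sqrt (real CARD('n)) * norm x)\<^sup>2"
    by (simp add: power_mult_distrib mult.commute)
  then show ?thesis
    by (rule power2_le_imp_le) simp
qed

lemma tv_dist_le_norm:
  fixes x y :: "real^'n"
  shows "tv_dist x y \<le> sqrt (real CARD('n)) / 2 * norm (x - y)"
  using sum_abs_le_sqrt_card_norm[of "x - y"] by (simp add: tv_dist_def)

lemma linear_coeff_zero_if_quadratic_nonneg:
  fixes a b :: real
  assumes "\<And>t. 0 \<le> 2*t*a + t\<^sup>2 * b"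
  shows "a = 0"
proof (rule ccontr)
  assume "a \<noteq> 0"
  define c where "c = \<bar>b\<bar> + 1"
  have "c > 0" "b - 2 * c < 0" by (auto simp: c_def)
  have "2 * (-a/c) * a + (-a/c)\<^sup>2 * b = a\<^sup>2 * (b - 2 * c) / c\<^sup>2"
    using \<open>c > 0\<close> by (simp add: field_simps power2_eq_square)
  also have "\<dots> < 0"
    using \<open>a \<noteq> 0\<close> \<open>c > 0\<close> \<open>b - 2 * c < 0\<close> by (simp add: divide_neg_pos mult_pos_neg)
  finally show False using assms[of "-a/c"] by linarith
qed

lemma power2_norm_add_scaleR:
  fixes a b :: "'a::real_inner"
  shows "(norm (a + t *\<^sub>R b))\<^sup>2 = (norm a)\<^sup>2 + 2*t*(a \<bullet> b) + t\<^sup>2 * (norm b)\<^sup>2"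
  unfolding power2_norm_eq_inner
  by (simp add: inner_add_left inner_add_right inner_commute power2_eq_square algebra_simps)

section \<open>Singular values\<close>

lemma gram_matrix_symmetric:
  fixes A :: "real^'n^'n"
  shows "((transpose A ** A) *v x) \<bullet> y = x \<bullet> ((transpose A ** A) *v y)"
proof -
  have "transpose (transpose A ** A) = transpose A ** A"
    by (simp add: matrix_transpose_mul)
  then have "(transpose A ** A) *v x = x v* (transpose A ** A)"
    by (metis vector_transpose_matrix)
  then show ?thesis by (simp add: dot_lmul_matrix)
qed

text \<open>Eigenvectors of the symmetric matrix \<open>A\<^sup>TA\<close> for distinct eigenvalues are orthogonal,
  hence independent, and there are only finitely many of them.\<close>
lemma finite_nonzero_singular_values:
  fixes A :: "real^'n^'n"
  shows "finite {\<sigma>. \<sigma> \<noteq> 0 \<and> singular_value A \<sigma>}"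
proof -
  define S where "S = {\<sigma>. \<sigma> \<noteq> 0 \<and> singular_value A \<sigma>}"
  define M where "M = transpose A ** A"
  define f where "f \<sigma> = (SOME v. v \<noteq> 0 \<and> M *v v = (\<sigma>^2) *\<^sub>R v)" for \<sigma>
  have f: "f \<sigma> \<noteq> 0 \<and> M *v f \<sigma> = (\<sigma>^2) *\<^sub>R f \<sigma>" "\<sigma> \<ge> 0" if "\<sigma> \<in> S" for \<sigma>
  proof -
    from that have ex: "\<exists>v. v \<noteq> 0 \<and> M *v v = (\<sigma>^2) *\<^sub>R v" and "\<sigma> \<ge> 0"
      by (auto simp: S_def singular_value_def M_def)
    then show "f \<sigma> \<noteq> 0 \<and> M *v f \<sigma> = (\<sigma>^2) *\<^sub>R f \<sigma>" "\<sigma> \<ge> 0"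
      unfolding f_def using someI_ex[OF ex] by auto
  qed
  have sq: "\<sigma>^2 \<noteq> \<tau>^2" if "\<sigma> \<in> S" "\<tau> \<in> S" "\<sigma> \<noteq> \<tau>" for \<sigma> \<tau>
    using f(2)[OF that(1)] f(2)[OF that(2)] that(3) by (metis power2_eq_iff_nonneg)
  have inj: "inj_on f S"
  proof (rule inj_onI, rule ccontr)
    fix \<sigma> \<tau> assume h: "\<sigma> \<in> S" "\<tau> \<in> S" "f \<sigma> = f \<tau>" "\<sigma> \<noteq> \<tau>"
    then have "(\<sigma>^2 - \<tau>^2) *\<^sub>R f \<sigma> = 0"
      using f(1)[OF h(1)] f(1)[OF h(2)] by (simp add: algebra_simps)
    then show False using sq[OF h(1,2,4)] f(1)[OF h(1)] by simp
  qed
  have orth: "f \<sigma> \<bullet> f \<tau> = 0" if "\<sigma> \<in> S" "\<tau> \<in> S" "\<sigma> \<noteq> \<tau>" for \<sigma> \<tau>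
  proof -
    have "\<sigma>^2 * (f \<sigma> \<bullet> f \<tau>) = (M *v f \<sigma>) \<bullet> f \<tau>" using f(1)[OF that(1)] by simp
    also have "\<dots> = f \<sigma> \<bullet> (M *v f \<tau>)" unfolding M_def by (rule gram_matrix_symmetric)
    also have "\<dots> = \<tau>^2 * (f \<sigma> \<bullet> f \<tau>)" using f(1)[OF that(2)] by simp
    finally have "(\<sigma>^2 - \<tau>^2) * (f \<sigma> \<bullet> f \<tau>) = 0" by (simp add: algebra_simps)
    then show ?thesis using sq[OF that] by simp
  qed
  have "pairwise orthogonal (f ` S)"
    unfolding pairwise_def orthogonal_def using orth by auto
  moreover have "0 \<notin> f ` S" using f by auto
  ultimately have "finite (f ` S)"
    by (intro finiteI_independent pairwise_orthogonal_independent)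
  then show ?thesis using inj finite_imageD S_def by blast
qed

lemma min_nonzero_singular_value_le:
  assumes "singular_value A \<sigma>" "\<sigma> \<noteq> 0"
  shows "min_nonzero_singular_value A \<le> \<sigma>"
  using assms finite_nonzero_singular_values
  unfolding min_nonzero_singular_value_def by (auto intro: Min_le)

lemma min_nonzero_singular_value_pos:
  assumes "singular_value A \<sigma>" "\<sigma> \<noteq> 0"
  shows "min_nonzero_singular_value A > 0"
proof -
  let ?S = "{\<sigma>. \<sigma> \<noteq> 0 \<and> singular_value A \<sigma>}"
  have "Min ?S \<in> ?S"
    using assms finite_nonzero_singular_values by (intro Min_in) auto
  then show ?thesis
    unfolding min_nonzero_singular_value_def singular_value_def by auto
qed

lemma hyperplane_sphere_minimizer:
  fixes A :: "real^'n^'n" and p v :: "real^'n"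
  assumes vp: "v \<bullet> p = 0" and v0: "v \<noteq> 0"
  obtains y0 where "y0 \<bullet> p = 0" "norm y0 = 1"
    "\<And>y. y \<bullet> p = 0 \<Longrightarrow> (norm (y0 v* A))\<^sup>2 * (norm y)\<^sup>2 \<le> (norm (y v* A))\<^sup>2"
proof -
  define T where "T = {y. y \<bullet> p = 0} \<inter> sphere (0::real^'n) 1"
  define q where "q y = (norm (transpose A *v y))\<^sup>2" for y
  have qv: "q y = (norm (y v* A))\<^sup>2" for y by (simp add: q_def)
  have normalized_in_T: "(1 / norm y) *\<^sub>R y \<in> T" if "y \<bullet> p = 0" "y \<noteq> 0" for y
    using that by (simp add: T_def)
  have "compact T"
    unfolding T_def inner_commute[of _ p] by (intro closed_Int_compact closed_hyperplane compact_sphere)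
  moreover have "T \<noteq> {}" using normalized_in_T[OF vp v0] by blast
  moreover have "continuous_on T q" unfolding q_def by (intro continuous_intros)
  ultimately obtain y0 where y0T: "y0 \<in> T" and y0min: "\<And>y. y \<in> T \<Longrightarrow> q y0 \<le> q y"
    using continuous_attains_inf[of T q] by auto
  have "q y0 * (norm y)\<^sup>2 \<le> q y" if "y \<bullet> p = 0" for y
  proof (cases "y = 0")
    case False
    have "q y0 \<le> q ((1 / norm y) *\<^sub>R y)" using y0min normalized_in_T[OF that False] by blast
    also have "\<dots> = q y / (norm y)\<^sup>2"
      by (simp add: qv scaleR_vector_matrix_assoc power_divide)
    finally show ?thesis using False by (simp add: pos_le_divide_eq)
  qed (simp add: q_def)
  with y0T show ?thesis using that by (auto simp: T_def qv)
qed

text \<open>First-order condition for the Rayleigh quotient: perturbing the minimizer \<open>y\<^sub>0\<close> in the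
  direction \<open>w\<close> (which stays in the hyperplane because \<open>p A = 0\<close>) leaves a quadratic in \<open>t\<close>
  that is nonnegative, so its linear coefficient \<open>|w|\<^sup>2\<close> vanishes.\<close>
lemma hyperplane_minimizer_singular_vector:
  fixes A :: "real^'n^'n" and p y0 :: "real^'n"
  assumes pA: "p v* A = 0" and y0p: "y0 \<bullet> p = 0" and y0n: "norm y0 = 1"
      and min: "\<And>y. y \<bullet> p = 0 \<Longrightarrow> (norm (y0 v* A))\<^sup>2 * (norm y)\<^sup>2 \<le> (norm (y v* A))\<^sup>2"
  shows "A *v (y0 v* A) = (norm (y0 v* A))\<^sup>2 *\<^sub>R y0"
proof -
  define u where "u = y0 v* A"
  define \<mu> where "\<mu> = (norm u)\<^sup>2"
  define w where "w = A *v u - \<mu> *\<^sub>R y0"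
  have "(A *v u) \<bullet> p = (p v* A) \<bullet> u"
    by (metis dot_lmul_matrix inner_commute)
  then have wp: "w \<bullet> p = 0" using pA by (simp add: w_def inner_diff_left y0p)
  have uw: "u \<bullet> (w v* A) = w \<bullet> (A *v u)"
    by (metis inner_commute dot_lmul_matrix)
  have ww: "w \<bullet> w = w \<bullet> (A *v u) - \<mu> * (y0 \<bullet> w)"
    using inner_diff_right[of w "A *v u" "\<mu> *\<^sub>R y0"]
    by (simp add: w_def[symmetric] inner_commute)
  have "0 \<le> 2*t*(w \<bullet> w) + t\<^sup>2 * ((norm (w v* A))\<^sup>2 - \<mu> * (norm w)\<^sup>2)" for t
  proof -
    have "(y0 + t *\<^sub>R w) \<bullet> p = 0" using y0p wp by (simp add: inner_add_left)
    then have "\<mu> * (norm (y0 + t *\<^sub>R w))\<^sup>2 \<le> (norm (u + t *\<^sub>R (w v* A)))\<^sup>2"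
      using min unfolding \<mu>_def u_def
      by (metis vector_matrix_left_distrib scaleR_vector_matrix_assoc)
    then have "\<mu> * (1 + 2*t*(y0 \<bullet> w) + t\<^sup>2 * (norm w)\<^sup>2)
        \<le> \<mu> + 2*t*(u \<bullet> (w v* A)) + t\<^sup>2 * (norm (w v* A))\<^sup>2"
      unfolding power2_norm_add_scaleR y0n \<mu>_def by simp
    moreover have "2*t*(w \<bullet> w) + t\<^sup>2 * ((norm (w v* A))\<^sup>2 - \<mu> * (norm w)\<^sup>2)
        = (\<mu> + 2*t*(u \<bullet> (w v* A)) + t\<^sup>2 * (norm (w v* A))\<^sup>2)
          - \<mu> * (1 + 2*t*(y0 \<bullet> w) + t\<^sup>2 * (norm w)\<^sup>2)"
      unfolding uw ww by (simp add: algebra_simps)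
    ultimately show ?thesis by linarith
  qed
  then have "w \<bullet> w = 0" by (rule linear_coeff_zero_if_quadratic_nonneg)
  then show ?thesis by (simp add: w_def u_def \<mu>_def)
qed

lemma singular_value_lower_bound_on_hyperplane:
  fixes A :: "real^'n^'n" and p v :: "real^'n"
  assumes pA: "p v* A = 0"
      and inj: "\<And>y. y \<bullet> p = 0 \<Longrightarrow> y v* A = 0 \<Longrightarrow> y = 0"
      and vp: "v \<bullet> p = 0" and v0: "v \<noteq> 0"
  obtains \<sigma> where "\<sigma> > 0" "singular_value A \<sigma>" "\<sigma> * norm v \<le> norm (v v* A)"
proof -
  obtain y0 where y0p: "y0 \<bullet> p = 0" and y0n: "norm y0 = 1"
    and min: "\<And>y. y \<bullet> p = 0 \<Longrightarrow> (norm (y0 v* A))\<^sup>2 * (norm y)\<^sup>2 \<le> (norm (y v* A))\<^sup>2"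
    using hyperplane_sphere_minimizer[OF vp v0] by blast
  define u where "u = y0 v* A"
  have u0: "u \<noteq> 0" using inj[OF y0p] y0n by (auto simp: u_def)
  have "(transpose A ** A) *v u = transpose A *v (A *v u)"
    by (simp add: matrix_vector_mul_assoc)
  also have "\<dots> = (norm u)\<^sup>2 *\<^sub>R u"
    using hyperplane_minimizer_singular_vector[OF pA y0p y0n min]
    by (simp add: u_def scaleR_vector_matrix_assoc)
  finally have "singular_value A (norm u)"
    unfolding singular_value_def using u0 by auto
  moreover have "(norm u * norm v)\<^sup>2 \<le> (norm (v v* A))\<^sup>2"
    using min[OF vp] by (simp add: u_def power_mult_distrib)
  then have "norm u * norm v \<le> norm (v v* A)" by (rule power2_le_imp_le) simp
  ultimately show ?thesis using that[of "norm u"] u0 by simp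
qed

section \<open>Invariant vectors of irreducible chains\<close>

lemma mpow_nonneg:
  assumes "stochastic P"
  shows "mpow P k $ i $ j \<ge> 0"
proof (induction k arbitrary: j)
  case 0 then show ?case by (simp add: mat_def)
next
  case (Suc k)
  then show ?case using assms unfolding stochastic_def
    by (simp add: matrix_matrix_mult_def sum_nonneg)
qed

lemma vector_matrix_mpow_invariant:
  assumes "y v* P = y"
  shows "y v* mpow P k = y"
  by (induction k) (simp_all add: assms vector_matrix_mul_assoc[symmetric])

lemma stochastic_vector_matrix_nonneg:
  assumes "stochastic P" "\<And>i. x$i \<ge> 0"
  shows "(x v* P)$j \<ge> 0"
  using assms unfolding stochastic_def by (simp add: vector_matrix_mult_def sum_nonneg)

lemma stochastic_sum_vector_matrix:
  assumes "stochastic P"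
  shows "(\<Sum>j\<in>UNIV. (x v* P)$j) = (\<Sum>i\<in>UNIV. x$i)"
proof -
  have "(\<Sum>j\<in>UNIV. (x v* P)$j) = (\<Sum>j\<in>UNIV. \<Sum>i\<in>UNIV. x$i * P$i$j)"
    by (simp add: vector_matrix_mult_def)
  also have "\<dots> = (\<Sum>i\<in>UNIV. x$i * (\<Sum>j\<in>UNIV. P$i$j))"
    unfolding sum_distrib_left by (rule sum.swap)
  finally show ?thesis using assms by (simp add: stochastic_def)
qed

text \<open>The positive part can only grow entrywise under \<open>P\<close>, while the total mass is preserved.\<close>
lemma invariant_pos_part:
  fixes P :: "real^'n^'n"
  assumes st: "stochastic P" and inv: "y v* P = y"
  shows "(\<chi> i. max (y$i) 0) v* P = (\<chi> i. max (y$i) 0)"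
proof -
  define yp where "yp = (\<chi> i. max (y$i) 0)"
  have ge: "(yp v* P)$j \<ge> yp$j" for j
  proof -
    have "(yp v* P)$j \<ge> (y v* P)$j"
      using st unfolding vector_matrix_mult_def stochastic_def
      by (auto intro!: sum_mono mult_right_mono simp: yp_def)
    moreover have "(yp v* P)$j \<ge> 0"
      by (rule stochastic_vector_matrix_nonneg[OF st]) (simp add: yp_def)
    ultimately show ?thesis using inv by (simp add: yp_def)
  qed
  have "(\<Sum>j\<in>UNIV. (yp v* P)$j - yp$j) = 0"
    by (simp add: sum_subtractf stochastic_sum_vector_matrix[OF st])
  then have "\<forall>j\<in>UNIV. (yp v* P)$j - yp$j = 0"
    by (subst sum_nonneg_eq_0_iff[symmetric]) (auto simp: ge)
  then show ?thesis by (simp add: vec_eq_iff yp_def)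
qed

lemma irreducible_invariant_pos:
  fixes P :: "real^'n^'n"
  assumes st: "stochastic P" and irr: "irreducible_chain P" and inv: "y v* P = y"
      and pos: "y$i > 0"
  shows "y$j > 0"
proof -
  define yp where "yp = (\<chi> i. max (y$i) 0)"
  have "yp v* P = yp" using invariant_pos_part[OF st inv] by (simp add: yp_def)
  obtain k where k: "mpow P k $ i $ j > 0"
    using irr unfolding irreducible_chain_def by blast
  have "yp$j = (yp v* mpow P k)$j"
    using vector_matrix_mpow_invariant[OF \<open>yp v* P = yp\<close>] by simp
  also have "\<dots> = (\<Sum>l\<in>UNIV. yp$l * mpow P k $ l $ j)"
    by (simp add: vector_matrix_mult_def)
  also have "\<dots> \<ge> yp$i * mpow P k $ i $ j"
    by (rule member_le_sum) (auto simp: yp_def mpow_nonneg[OF st])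
  finally have "yp$j \<ge> yp$i * mpow P k $ i $ j" .
  moreover have "yp$i * mpow P k $ i $ j > 0" using pos k by (simp add: yp_def)
  ultimately have "yp$j > 0" by linarith
  then show ?thesis by (simp add: yp_def)
qed

lemma irreducible_invariant_sum_zero:
  fixes P :: "real^'n^'n"
  assumes st: "stochastic P" and irr: "irreducible_chain P" and inv: "x v* P = x"
      and sum0: "(\<Sum>i\<in>UNIV. x$i) = 0"
  shows "x = 0"
proof (rule ccontr)
  have pos_sum: "(\<Sum>j\<in>UNIV. y$j) > 0" if "y v* P = y" "y$i > 0" for y :: "real^'n" and i
    using irreducible_invariant_pos[OF st irr that] by (simp add: sum_pos)
  assume "x \<noteq> 0"
  then obtain i where "x$i > 0 \<or> (-x)$i > 0" by (auto simp: vec_eq_iff linorder_neq_iff)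
  moreover have "(-x) v* P = -x" using inv by (simp add: vector_matrix_mult_def sum_negf vec_eq_iff)
  ultimately show False
    using pos_sum[of x i] pos_sum[of "-x" i] inv sum0 by (auto simp: sum_negf)
qed

lemma irreducible_left_kernel:
  fixes P :: "real^'n^'n"
  assumes "stochastic P" "irreducible_chain P" "stationary_dist P \<pi>"
      and "x v* (mat 1 - P) = 0"
  shows "x = (\<Sum>i\<in>UNIV. x$i) *\<^sub>R \<pi>"
proof -
  define y where "y = x - (\<Sum>i\<in>UNIV. x$i) *\<^sub>R \<pi>"
  have "y v* P = y" using assms(3,4)
    by (simp add: y_def stationary_dist_def vector_matrix_mult_diff_distrib
        vector_matrix_mult_diff_rdistrib scaleR_vector_matrix_assoc)
  moreover have "(\<Sum>i\<in>UNIV. y$i) = 0" using assms(3)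
    by (simp add: y_def stationary_dist_def sum_subtractf sum_distrib_left[symmetric])
  ultimately have "y = 0" using irreducible_invariant_sum_zero[OF assms(1,2)] by blast
  then show ?thesis by (simp add: y_def)
qed

section \<open>Perturbation of the stationary distribution\<close>

text \<open>Splitting \<open>d = v + c \<pi>\<close> with \<open>v \<perp> \<pi>\<close>, the zero coordinate sum forces
  \<open>|c| = |\<Sum> v\<^sub>i| \<le> \<surd>n |v|\<close>, and \<open>|\<pi>| \<le> 1\<close>.\<close>
lemma zero_sum_singular_value_bound:
  fixes P :: "real^'n^'n" and d :: "real^'n"
  assumes st: "stochastic P" and irr: "irreducible_chain P" and sd: "stationary_dist P \<pi>"
      and sum0: "(\<Sum>i\<in>UNIV. d$i) = 0" and d0: "d \<noteq> 0"
  obtains \<sigma> where "\<sigma> > 0" "singular_value (mat 1 - P) \<sigma>"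
    "\<sigma> * norm d \<le> (1 + sqrt (real CARD('n))) * norm (d v* (mat 1 - P))"
proof -
  define A where "A = mat 1 - P"
  have \<pi>nn: "\<And>i. \<pi>$i \<ge> 0" and \<pi>sum: "(\<Sum>i\<in>UNIV. \<pi>$i) = 1" and "\<pi> v* P = \<pi>"
    using sd unfolding stationary_dist_def by auto
  then have \<pi>A: "\<pi> v* A = 0" by (simp add: A_def vector_matrix_mult_diff_rdistrib)
  have \<pi>0: "\<pi> \<noteq> 0" using \<pi>sum by auto
  have inj: "y = 0" if "y \<bullet> \<pi> = 0" "y v* A = 0" for y
    using irreducible_left_kernel[OF st irr sd, of y] that \<pi>0 unfolding A_def
    by (metis inner_commute inner_scaleR_right inner_eq_zero_iff mult_eq_0_iff scale_eq_0_iff)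
  define c where "c = (d \<bullet> \<pi>) / (\<pi> \<bullet> \<pi>)"
  define v where "v = d - c *\<^sub>R \<pi>"
  have vp: "v \<bullet> \<pi> = 0" using \<pi>0 by (simp add: v_def c_def inner_diff_left)
  have vA: "v v* A = d v* A"
    by (simp add: v_def vector_matrix_mult_diff_distrib scaleR_vector_matrix_assoc \<pi>A)
  have "(\<Sum>i\<in>UNIV. v$i) + c = 0"
    using sum0 \<pi>sum by (simp add: v_def sum_subtractf sum_distrib_left[symmetric])
  then have "\<bar>c\<bar> \<le> sqrt (real CARD('n)) * norm v"
    using sum_abs[of "\<lambda>i. v$i" UNIV] sum_abs_le_sqrt_card_norm[of v] by linarith
  moreover have "norm \<pi> \<le> 1" using norm_le_l1_cart[of \<pi>] \<pi>nn \<pi>sum by simp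
  ultimately have "norm (c *\<^sub>R \<pi>) \<le> sqrt (real CARD('n)) * norm v"
    by (metis abs_ge_zero mult_left_le norm_scaleR order_trans)
  then have dv: "norm d \<le> (1 + sqrt (real CARD('n))) * norm v"
    using norm_triangle_ineq[of v "c *\<^sub>R \<pi>"] by (simp add: v_def algebra_simps)
  have "v \<noteq> 0"
  proof
    assume "v = 0"
    then have "d = c *\<^sub>R \<pi>" by (simp add: v_def)
    then show False using sum0 \<pi>sum d0 by (simp add: sum_distrib_left[symmetric])
  qed
  then obtain \<sigma> where \<sigma>: "\<sigma> > 0" "singular_value A \<sigma>" "\<sigma> * norm v \<le> norm (d v* A)"
    using singular_value_lower_bound_on_hyperplane[OF \<pi>A inj vp] vA by metis
  have "\<sigma> * norm d \<le> (1 + sqrt (real CARD('n))) * (\<sigma> * norm v)"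
    using dv \<sigma>(1) by (simp add: mult_left_mono mult.left_commute)
  also have "\<dots> \<le> (1 + sqrt (real CARD('n))) * norm (d v* A)"
    using \<sigma>(3) by (intro mult_left_mono) auto
  finally show ?thesis using that \<sigma>(1,2) by (simp add: A_def)
qed

lemma stochastic_diff_norm_le:
  fixes P Q :: "real^'n^'n" and x :: "real^'n"
  assumes "stochastic P" "stochastic Q" "\<And>i. x$i \<ge> 0" "(\<Sum>i\<in>UNIV. x$i) = 1"
  shows "norm (x v* Q - x v* P) \<le> 2"
proof -
  have "norm (x v* Q - x v* P) \<le> (\<Sum>j\<in>UNIV. \<bar>(x v* Q - x v* P)$j\<bar>)" by (rule norm_le_l1_cart)
  also have "\<dots> \<le> (\<Sum>j\<in>UNIV. (x v* Q)$j + (x v* P)$j)"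
    using stochastic_vector_matrix_nonneg[OF assms(1,3)] stochastic_vector_matrix_nonneg[OF assms(2,3)]
    by (intro sum_mono) (simp add: abs_le_iff)
  also have "\<dots> = 2"
    using assms by (simp add: sum.distrib stochastic_sum_vector_matrix)
  finally show ?thesis .
qed

lemma stationary_interpolation_residual:
  fixes P0 P1 :: "real^'n^'n"
  assumes "\<pi>0 v* P0 = \<pi>0" "\<pi>s v* ((1 - s) *\<^sub>R P0 + s *\<^sub>R P1) = \<pi>s"
  shows "(\<pi>s - \<pi>0) v* (mat 1 - P0) = s *\<^sub>R (\<pi>s v* P1 - \<pi>s v* P0)"
proof -
  have affine: "x - a = s *\<^sub>R (b - a)" if "x = (1 - s) *\<^sub>R a + s *\<^sub>R b" for x a b :: "real^'n"
    using that by (simp add: algebra_simps)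
  have "(\<pi>s - \<pi>0) v* (mat 1 - P0) = \<pi>s - \<pi>s v* P0"
    using assms(1) by (simp add: vector_matrix_mult_diff_distrib vector_matrix_mult_diff_rdistrib)
  also have "\<dots> = s *\<^sub>R (\<pi>s v* P1 - \<pi>s v* P0)"
    using assms(2) by (intro affine) (simp add: vector_matrix_mult_add_rdistrib vector_scaleR_matrix_ac)
  finally show ?thesis .
qed

lemma stationary_perturbation_norm_bound:
  fixes P0 P1 :: "real^'n^'n"
  assumes st0: "stochastic P0" and irr0: "irreducible_chain P0" and st1: "stochastic P1"
      and s: "s \<ge> 0" and sd0: "stationary_dist P0 \<pi>0"
      and sds: "stationary_dist ((1 - s) *\<^sub>R P0 + s *\<^sub>R P1) \<pi>s" and ne: "\<pi>s \<noteq> \<pi>0"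
  obtains \<sigma> where "\<sigma> > 0" "singular_value (mat 1 - P0) \<sigma>"
    "\<sigma> * norm (\<pi>s - \<pi>0) \<le> 2 * (1 + sqrt (real CARD('n))) * s"
proof -
  have "(\<Sum>i\<in>UNIV. (\<pi>s - \<pi>0)$i) = 0"
    using sd0 sds by (simp add: stationary_dist_def sum_subtractf)
  then obtain \<sigma> where \<sigma>: "\<sigma> > 0" "singular_value (mat 1 - P0) \<sigma>" and
    b: "\<sigma> * norm (\<pi>s - \<pi>0) \<le> (1 + sqrt (real CARD('n))) * norm ((\<pi>s - \<pi>0) v* (mat 1 - P0))"
    using zero_sum_singular_value_bound[OF st0 irr0 sd0] ne by (metis eq_iff_diff_eq_0)
  have "(\<pi>s - \<pi>0) v* (mat 1 - P0) = s *\<^sub>R (\<pi>s v* P1 - \<pi>s v* P0)"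
    using sd0 sds unfolding stationary_dist_def by (intro stationary_interpolation_residual) auto
  moreover have "norm (\<pi>s v* P1 - \<pi>s v* P0) \<le> 2"
    using sds by (intro stochastic_diff_norm_le[OF st0 st1]) (auto simp: stationary_dist_def)
  ultimately have "norm ((\<pi>s - \<pi>0) v* (mat 1 - P0)) \<le> 2 * s"
    using s by (simp add: mult_left_mono mult.commute)
  then have "\<sigma> * norm (\<pi>s - \<pi>0) \<le> (1 + sqrt (real CARD('n))) * (2 * s)"
    using b by (meson order_trans mult_left_mono add_nonneg_nonneg zero_le_one real_sqrt_ge_zero of_nat_0_le_iff)
  then show ?thesis using that[OF \<sigma>] by (simp add: ac_simps)
qed

lemma sqrt_mult_one_plus_sqrt_le:
  fixes n :: real
  assumes "n \<ge> 1"
  shows "sqrt n * (1 + sqrt n) \<le> 2 * n powr (3/2)"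
proof -
  define r where "r = sqrt n"
  have r1: "r \<ge> 1" and rr: "r * r = n" using assms by (simp_all add: r_def)
  from r1 have "r \<le> r * r" "r * r \<le> r * r * r"
    by (simp_all add: mult_le_cancel_right1 mult_le_cancel_left1)
  then have "r * (1 + r) \<le> 2 * (r * r * r)"
    by (simp only: distrib_left mult_1_right)
  also have "r * r * r = n powr (3/2)"
    using rr assms powr_add[of n 1 "1/2"] by (simp add: r_def powr_half_sqrt)
  finally show ?thesis by (simp add: r_def)
qed

lemma stationary_perturbation_tv_bound:
  fixes P0 P1 :: "real^'n^'n"
  assumes "stochastic P0" "irreducible_chain P0" "stochastic P1"
      and s: "s \<ge> 0" and "stationary_dist P0 \<pi>0"
      and "stationary_dist ((1 - s) *\<^sub>R P0 + s *\<^sub>R P1) \<pi>s" and "\<pi>s \<noteq> \<pi>0"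
  shows "min_nonzero_singular_value (mat 1 - P0) > 0"
    and "min_nonzero_singular_value (mat 1 - P0) * tv_dist \<pi>s \<pi>0 \<le> 2 * real CARD('n) powr (3/2) * s"
proof -
  let ?m = "min_nonzero_singular_value (mat 1 - P0)" and ?r = "sqrt (real CARD('n))"
  obtain \<sigma> where \<sigma>: "\<sigma> > 0" "singular_value (mat 1 - P0) \<sigma>"
    and b: "\<sigma> * norm (\<pi>s - \<pi>0) \<le> 2 * (1 + ?r) * s"
    using stationary_perturbation_norm_bound[OF assms] .
  show m: "?m > 0" using min_nonzero_singular_value_pos \<sigma> by auto
  have "?m * tv_dist \<pi>s \<pi>0 \<le> \<sigma> * tv_dist \<pi>s \<pi>0"
    using min_nonzero_singular_value_le \<sigma> by (intro mult_right_mono) (auto simp: tv_dist_def sum_nonneg)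
  also have "\<dots> \<le> \<sigma> * (?r / 2 * norm (\<pi>s - \<pi>0))"
    using tv_dist_le_norm[of \<pi>s \<pi>0] \<sigma>(1) by (simp add: mult_left_mono)
  also have "\<dots> = ?r / 2 * (\<sigma> * norm (\<pi>s - \<pi>0))" by simp
  also have "\<dots> \<le> ?r / 2 * (2 * (1 + ?r) * s)" using b by (intro mult_left_mono) auto
  also have "\<dots> = ?r * (1 + ?r) * s" by simp
  also have "\<dots> \<le> 2 * real CARD('n) powr (3/2) * s"
    using s by (intro mult_right_mono sqrt_mult_one_plus_sqrt_le) auto
  finally show "?m * tv_dist \<pi>s \<pi>0 \<le> 2 * real CARD('n) powr (3/2) * s" .
qed

theorem proposition4:
  fixes P0 P1 :: "real^'n^'n" and \<pi> :: "real \<Rightarrow> real^'n"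
  assumes "stochastic P0" "irreducible_chain P0" "aperiodic_chain P0"
      and "stochastic P1" "irreducible_chain P1" "aperiodic_chain P1"
      and "\<And>s. s \<in> {0..1} \<Longrightarrow> stationary_dist ((1 - s) *\<^sub>R P0 + s *\<^sub>R P1) (\<pi> s)"
  shows "(\<forall>\<epsilon>>0. \<exists>\<delta>>0. \<forall>s\<in>{0..1}. s \<le> \<delta> \<longrightarrow> tv_dist (\<pi> s) (\<pi> 0) \<le> \<epsilon>)
       \<and> (\<forall>\<epsilon>>0. \<forall>s\<in>{0..1}.
            s \<le> \<epsilon> * min_nonzero_singular_value (mat 1 - P0) / (2 * real CARD('n) powr (3/2))
            \<longrightarrow> tv_dist (\<pi> s) (\<pi> 0) \<le> \<epsilon>)"
proof -
  define \<sigma> where "\<sigma> = min_nonzero_singular_value (mat 1 - P0)"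
  define N where "N = 2 * real CARD('n) powr (3/2)"
  have N: "N > 0" by (simp add: N_def)
  have bound: "\<sigma> > 0" "\<sigma> * tv_dist (\<pi> s) (\<pi> 0) \<le> N * s"
    if "s \<in> {0..1}" "\<pi> s \<noteq> \<pi> 0" for s
    using stationary_perturbation_tv_bound[OF assms(1,2,4) _ _ assms(7)[OF that(1)] that(2)]
      assms(7)[of 0] that(1) unfolding \<sigma>_def N_def by auto
  have small: "tv_dist (\<pi> s) (\<pi> 0) \<le> \<epsilon>" if "\<epsilon> > 0" "s \<in> {0..1}" "s \<le> \<epsilon> * \<sigma> / N" for \<epsilon> s
  proof (cases "\<pi> s = \<pi> 0")
    case False
    have "\<sigma> * tv_dist (\<pi> s) (\<pi> 0) \<le> N * s" using bound that(2) False by blast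
    also have "N * s \<le> \<sigma> * \<epsilon>" using that(3) N by (simp add: pos_le_divide_eq mult.commute)
    finally show ?thesis using bound(1)[OF that(2) False] by simp
  qed (use that in \<open>simp add: tv_dist_def\<close>)
  have "\<exists>\<delta>>0. \<forall>s\<in>{0..1}. s \<le> \<delta> \<longrightarrow> tv_dist (\<pi> s) (\<pi> 0) \<le> \<epsilon>" if "\<epsilon> > 0" for \<epsilon>
  proof (cases "\<exists>s\<in>{0..1}. \<pi> s \<noteq> \<pi> 0")
    case True
    then have "\<epsilon> * \<sigma> / N > 0" using bound(1) that N by auto
    with small[OF that] show ?thesis by blast
  next
    case False
    have "tv_dist (\<pi> s) (\<pi> 0) = 0" if "s \<in> {0..1}" for s
    proof -
      have "\<pi> s = \<pi> 0" using False that by blast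
      then show ?thesis by (simp add: tv_dist_def)
    qed
    then show ?thesis using that by (intro exI[of _ 1]) auto
  qed
  with small show ?thesis unfolding \<sigma>_def N_def by blast
qed

end
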